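(* Let $P$ be a finite nonempty set of nonempty linear strings over a finite alphabet $\Sigma$. Let $w_o$ be a shortest linear superstring of $P$, and let $c_o$ be a shortest circular superstring of $P\cup\overline P$. Then $2|w_o|=|c_o|$.
   Context: Let $\overline\Sigma=\{\overline a: a\in\Sigma\}$ be a disjoint copy of $\Sigma$. For $w=a_1\dots a_k$, set $\overline w=\overline{a_1}\dots\overline{a_k}$, and let $\overline P=\{\overline w: w\in P\}$. A linear superstring of a set of strings is a linear string containing each of them as a substring. A circular string $\langle a_1\dots a_n\rangle$ has length $n$, and its substrings are the finite substrings of $(a_1\dots a_n)^\infty$. A circular superstring is a circular string containing each string of the set as a substring. *)

theory Defs
  imports Main "HOL-Library.Sublist"
begin

text \<open>Strings over an alphabet are lists. The barred copy of the alphabet is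
  realised as the disjoint sum: a letter a is Inl a, its bar is Inr a.\<close>

definition bar_str :: "'a list \<Rightarrow> ('a + 'a) list" where
  "bar_str w = map Inr w"

definition plain_str :: "'a list \<Rightarrow> ('a + 'a) list" where
  "plain_str w = map Inl w"

definition linear_superstring :: "'a list set \<Rightarrow> 'a list \<Rightarrow> bool" where
  "linear_superstring P w \<longleftrightarrow> (\<forall>p\<in>P. sublist p w)"

text \<open>A circular string is represented by a nonempty list c = a_1 ... a_n;
  its substrings are the finite substrings of c^\<infinity>.\<close>
definition circ_substring :: "'a list \<Rightarrow> 'a list \<Rightarrow> bool" where
  "circ_substring s c \<longleftrightarrow> c \<noteq> [] \<and>
     (\<exists>i. \<forall>j < length s. s ! j = c ! ((i + j) mod length c))"

definition circular_superstring :: "'a list set \<Rightarrow> 'a list \<Rightarrow> bool" where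
  "circular_superstring P c \<longleftrightarrow> c \<noteq> [] \<and> (\<forall>p\<in>P. circ_substring p c)"

end

(*
  A shortest linear superstring w of P yields the circular superstring <w wbar> of
  P and Pbar, so |c_o| <= 2|w_o|. Conversely, cut the circular superstring c_o open
  just before a barred letter: no unbarred string of P can occur across the cut, so
  the unbarred letters of c_o, read from there, form a linear superstring of P;
  symmetrically for the barred letters. Hence each of the two halves of c_o has
  at least |w_o| letters.
*)
theory Submission
  imports Defs
begin

lemma sublist_filter: "sublist xs ys \<Longrightarrow> sublist (filter Q xs) (filter Q ys)"
  unfolding sublist_def by (metis filter_append)

lemma length_filter_rotate: "length (filter Q (rotate r xs)) = length (filter Q xs)"
  by (metis rotate_drop_take filter_append length_append add.commute append_take_drop_id)

lemma sublist_imp_circ_substring: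
  assumes "sublist s c" "c \<noteq> []"
  shows "circ_substring s c"
proof -
  obtain u v where c: "c = u @ s @ v" using assms(1) by (auto simp: sublist_def)
  have "s ! j = c ! ((length u + j) mod length c)" if "j < length s" for j
    using that by (simp add: c nth_append)
  then show ?thesis using assms(2) unfolding circ_substring_def by blast
qed

lemma circ_substring_set:
  assumes "circ_substring s c"
  shows "set s \<subseteq> set c"
proof
  fix x assume "x \<in> set s"
  then obtain j where j: "j < length s" "x = s ! j" by (auto simp: in_set_conv_nth)
  from assms obtain i where "c \<noteq> []" "s ! j = c ! ((i + j) mod length c)"
    using j(1) unfolding circ_substring_def by blast
  then show "x \<in> set c" using j(2) by simp
qed

lemma circ_substring_rotate:
  assumes "circ_substring s c"
  shows "circ_substring s (rotate r c)"
proof -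
  define n where "n = length c"
  obtain i where c: "c \<noteq> []" and i: "\<And>j. j < length s \<Longrightarrow> s ! j = c ! ((i + j) mod n)"
    using assms unfolding circ_substring_def n_def by blast
  have "r \<le> n * r" using c by (simp add: n_def Suc_le_eq)
  \<comment> \<open>shifting the start by n r - r undoes the rotation by r, modulo n\<close>
  have "s ! j = rotate r c ! ((i + (n * r - r) + j) mod n)" if "j < length s" for j
  proof -
    have "(r + ((i + (n * r - r) + j) mod n)) mod n = (r + (i + (n * r - r) + j)) mod n"
      by (rule mod_add_right_eq)
    also have "r + (i + (n * r - r) + j) = i + j + n * r" using \<open>r \<le> n * r\<close> by linarith
    also have "(i + j + n * r) mod n = (i + j) mod n" by simp
    finally show ?thesis
      using c i[OF that] by (simp add: n_def nth_rotate)
  qed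
  then show ?thesis using c unfolding circ_substring_def n_def by auto
qed

lemma circ_substring_imp_sublist:
  assumes "circ_substring s c" "\<not> Q (hd c)" "\<forall>x\<in>set s. Q x"
  shows "sublist s c"
proof -
  define n where "n = length c"
  obtain i where c: "c \<noteq> []" and i: "\<And>j. j < length s \<Longrightarrow> s ! j = c ! ((i + j) mod n)"
    using assms(1) unfolding circ_substring_def n_def by blast
  define i0 where "i0 = i mod n"
  have i0: "(i0 + j) mod n = (i + j) mod n" for j
    by (simp add: i0_def mod_add_left_eq)
  \<comment> \<open>the occurrence cannot wrap around, as it would then cover position 0\<close>
  have fits: "i0 + length s \<le> n"
  proof (rule ccontr)
    assume "\<not> ?thesis"
    moreover have "i0 < n" using c by (simp add: i0_def n_def)
    ultimately have j: "n - i0 < length s" "(i0 + (n - i0)) mod n = 0" by simp_all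
    then have "s ! (n - i0) = hd c" using i[of "n - i0"] i0[of "n - i0"] c by (simp add: hd_conv_nth)
    then show False using assms(2,3) j(1) by (metis nth_mem)
  qed
  have "s = take (length s) (drop i0 c)"
  proof (rule nth_equalityI)
    show "length s = length (take (length s) (drop i0 c))" using fits by (simp add: n_def)
  next
    fix j assume "j < length s"
    then show "s ! j = take (length s) (drop i0 c) ! j"
      using fits i i0[of j] by (simp add: n_def)
  qed
  then show ?thesis by (metis sublist_take sublist_drop sublist_order.order_trans)
qed

lemma linear_superstring_from_circ_image:
  assumes circ: "\<forall>p\<in>P. circ_substring (map f p) c"
    and x: "x \<in> set c" "x \<notin> range f"
    and inv: "\<And>y. g (f y) = y"
    and alph: "set c \<inter> range f \<subseteq> f ` A"
  shows "\<exists>w\<in>lists A. linear_superstring P w \<and> length w = length (filter (\<lambda>y. y \<in> range f) c)"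
proof -
  obtain r where r: "r < length c" "c ! r = x" using x(1) by (auto simp: in_set_conv_nth)
  define d where "d = rotate r c"
  define w where "w = map g (filter (\<lambda>y. y \<in> range f) d)"
  have "hd d = x" using r hd_rotate_conv_nth[of c r] by (fastforce simp: d_def)
  have "sublist p w" if "p \<in> P" for p
  proof -
    have "circ_substring (map f p) d" using circ that by (simp add: d_def circ_substring_rotate)
    then have "sublist (map f p) d"
      by (rule circ_substring_imp_sublist[where Q = "\<lambda>y. y \<in> range f"]) (use \<open>hd d = x\<close> x(2) in auto)
    then have "sublist (filter (\<lambda>y. y \<in> range f) (map f p)) (filter (\<lambda>y. y \<in> range f) d)"
      by (rule sublist_filter)
    then have "sublist (map f p) (filter (\<lambda>y. y \<in> range f) d)"
      by (simp add: filter_id_conv)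
    then have "sublist (map g (map f p)) w" unfolding w_def by (rule map_mono_sublist)
    then show ?thesis by (simp add: comp_def inv)
  qed
  moreover have "w \<in> lists A"
  proof -
    have "y \<in> A" if "f y \<in> set c" for y
    proof -
      from alph that obtain a where "a \<in> A" "f y = f a" by blast
      then show ?thesis by (metis inv)
    qed
    then show ?thesis by (auto simp: w_def d_def inv)
  qed
  moreover have "length w = length (filter (\<lambda>y. y \<in> range f) c)"
    by (simp add: w_def d_def length_filter_rotate)
  ultimately show ?thesis unfolding linear_superstring_def by blast
qed

lemma circular_superstring_plain_bar:
  assumes "linear_superstring P w" "w \<noteq> []"
  shows "circular_superstring (plain_str ` P \<union> bar_str ` P) (plain_str w @ bar_str w)"
proof -
  have "sublist q (plain_str w @ bar_str w)" if q: "q \<in> plain_str ` P \<union> bar_str ` P" for q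
  proof -
    obtain p where "p \<in> P" and q_cases: "q = map Inl p \<or> q = map Inr p"
      using q unfolding plain_str_def bar_str_def by blast
    then have "sublist p w" using assms(1) unfolding linear_superstring_def by blast
    then have "sublist (map Inl p) (map Inl w)" "sublist (map Inr p) (map Inr w)"
      by (simp_all add: map_mono_sublist)
    with q_cases show ?thesis unfolding plain_str_def bar_str_def
      by (metis sublist_append_leftI sublist_append_rightI sublist_order.order_trans)
  qed
  then show ?thesis
    using assms(2) by (auto simp: circular_superstring_def plain_str_def intro: sublist_imp_circ_substring)
qed

lemma circular_superstring_plain_bar_split:
  assumes circ: "circular_superstring (plain_str ` P \<union> bar_str ` P) c"
    and alph: "c \<in> lists (\<Sigma> <+> \<Sigma>)"
    and p0: "p0 \<in> P" "p0 \<noteq> []"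
  shows "\<exists>wl\<in>lists \<Sigma>. \<exists>wr\<in>lists \<Sigma>. linear_superstring P wl \<and> linear_superstring P wr
           \<and> length wl + length wr = length c"
proof -
  have circ_l: "\<forall>p\<in>P. circ_substring (map Inl p) c"
   and circ_r: "\<forall>p\<in>P. circ_substring (map Inr p) c"
    using circ by (auto simp: circular_superstring_def plain_str_def bar_str_def)
  have in_l: "Inl (hd p0) \<in> set c" and in_r: "Inr (hd p0) \<in> set c"
    using circ_l circ_r p0 circ_substring_set by (fastforce simp: hd_map)+
  have alph_l: "set c \<inter> range Inl \<subseteq> Inl ` \<Sigma>" and alph_r: "set c \<inter> range Inr \<subseteq> Inr ` \<Sigma>"
    using alph by auto
  obtain wl where wl: "wl \<in> lists \<Sigma>" "linear_superstring P wl"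
    "length wl = length (filter (\<lambda>y. y \<in> range Inl) c)"
    using linear_superstring_from_circ_image[OF circ_l in_r _ _ alph_l, where g = projl] by auto
  obtain wr where wr: "wr \<in> lists \<Sigma>" "linear_superstring P wr"
    "length wr = length (filter (\<lambda>y. y \<in> range Inr) c)"
    using linear_superstring_from_circ_image[OF circ_r in_l _ _ alph_r, where g = projr] by auto
  have "filter (\<lambda>y. y \<in> range Inr) c = filter (\<lambda>y. y \<notin> range Inl) c"
    by (rule filter_cong[OF refl]) (metis Inl_Inr_False rangeE rangeI sumE)
  then have "length wl + length wr = length c"
    using wl(3) wr(3) sum_length_filter_compl[of "\<lambda>y. y \<in> range Inl" c] by simp
  with wl wr show ?thesis by blast
qed

theorem lemma5:
  fixes \<Sigma> :: "'a set" and P :: "'a list set"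
    and w\<^sub>o :: "'a list" and c\<^sub>o :: "('a + 'a) list"
  assumes "finite \<Sigma>"
    and "finite P" and "P \<noteq> {}" and "\<forall>p\<in>P. p \<noteq> []" and "P \<subseteq> lists \<Sigma>"
    and "w\<^sub>o \<in> lists \<Sigma>" and "linear_superstring P w\<^sub>o"
    and "\<forall>w\<in>lists \<Sigma>. linear_superstring P w \<longrightarrow> length w\<^sub>o \<le> length w"
    and "c\<^sub>o \<in> lists (\<Sigma> <+> \<Sigma>)"
    and "circular_superstring (plain_str ` P \<union> bar_str ` P) c\<^sub>o"
    and "\<forall>c\<in>lists (\<Sigma> <+> \<Sigma>). circular_superstring (plain_str ` P \<union> bar_str ` P) c
           \<longrightarrow> length c\<^sub>o \<le> length c"
  shows "2 * length w\<^sub>o = length c\<^sub>o"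
proof -
  obtain p0 where "p0 \<in> P" "p0 \<noteq> []" using assms(3,4) by blast
  then have "w\<^sub>o \<noteq> []"
    using assms(7) unfolding linear_superstring_def by (metis sublist_Nil_right)
  then have "length c\<^sub>o \<le> length (plain_str w\<^sub>o @ bar_str w\<^sub>o)"
    using assms(6,7,11) circular_superstring_plain_bar by (fastforce simp: plain_str_def bar_str_def)
  then have upper: "length c\<^sub>o \<le> 2 * length w\<^sub>o" by (simp add: plain_str_def bar_str_def)
  obtain wl wr where "wl \<in> lists \<Sigma>" "wr \<in> lists \<Sigma>" "linear_superstring P wl" "linear_superstring P wr"
    "length wl + length wr = length c\<^sub>o"
    using circular_superstring_plain_bar_split[OF assms(10,9) \<open>p0 \<in> P\<close> \<open>p0 \<noteq> []\<close>] by blast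
  with assms(8) have "length w\<^sub>o \<le> length wl" "length w\<^sub>o \<le> length wr" by blast+
  with upper \<open>length wl + length wr = length c\<^sub>o\<close> show ?thesis by linarith
qed

end
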